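(* For every integer $i\geq 8$ there exist an integer $j<i$ and directed graphs $G$ and $H$ such that $G$ has diameter $i$, $H$ has diameter $j$, and the directed edge polytopes of $G$ and $H$ have the same volume.
   Context: For a directed graph $D=(V,A)$, its directed edge polytope is the convex hull in $\mathbb{R}^V$ of the vectors $e_v-e_w$ for all arcs $(w,v)\in A$, where $(e_u)_{u\in V}$ is the standard basis. The distance from $u$ to $v$ is the number of arcs of a shortest directed path from $u$ to $v$ ($\infty$ if none exists), and the diameter is the maximum distance over all ordered pairs of vertices. *)

theory Defs
  imports "HOL-Analysis.Analysis" "HOL-Library.Extended_Nat"
begin

definition digraph :: "nat set \<Rightarrow> (nat \<times> nat) set \<Rightarrow> bool" where
  "digraph V A \<longleftrightarrow> finite V \<and> A \<subseteq> V \<times> V \<and> (\<forall>(w,v)\<in>A. w \<noteq> v)"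

text \<open>Distance: number of arcs of a shortest directed path (infinity if none).
A walk of length n from u to v exists iff (u,v) is in A^^n; a shortest walk is a path.\<close>
definition ddist :: "(nat \<times> nat) set \<Rightarrow> nat \<Rightarrow> nat \<Rightarrow> enat" where
  "ddist A u v = (if \<exists>n. (u, v) \<in> A ^^ n then enat (LEAST n. (u, v) \<in> A ^^ n) else \<infinity>)"

definition diameter :: "nat set \<Rightarrow> (nat \<times> nat) set \<Rightarrow> enat" where
  "diameter V A = (SUP u\<in>V. SUP v\<in>V. ddist A u v)"

definition arc_vec :: "nat \<times> nat \<Rightarrow> (nat \<Rightarrow> real)" where
  "arc_vec a = (\<lambda>u. (if u = snd a then 1 else 0) - (if u = fst a then 1 else 0))"

definition dir_edge_polytope :: "(nat \<times> nat) set \<Rightarrow> (nat \<Rightarrow> real) set" where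
  "dir_edge_polytope A =
     {x. \<exists>c. (\<forall>a\<in>A. 0 \<le> c a) \<and> (\<Sum>a\<in>A. c a) = 1 \<and> x = (\<lambda>u. \<Sum>a\<in>A. c a * arc_vec a u)}"

text \<open>Normalized volume of the directed edge polytope of a digraph whose polytope has
dimension |V|-1 (e.g. any strongly connected digraph, in particular any digraph of finite
diameter).  The polytope lies in the hyperplane sum x = 0, whose lattice points project
unimodularly onto Z^(V - {v0}) by forgetting the coordinate v0 = Min V.  So the normalized
volume is (|V|-1)! times the Lebesgue measure of this projection.\<close>
definition norm_volume :: "nat set \<Rightarrow> (nat \<times> nat) set \<Rightarrow> real" where
  "norm_volume V A =
     (let W = V - {Min V} in
      fact (card W) *
        measure (Pi\<^sub>M W (\<lambda>_. lborel)) ((\<lambda>x. restrict x W) ` dir_edge_polytope A))"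

end

theory Submission
  imports Defs
begin

text \<open>On the vertices 0..i let G consist of the triangle 0\<rightarrow>1\<rightarrow>2\<rightarrow>0 with the extra arc 1\<rightarrow>0,
the arcs 0\<rightarrow>t for 3 \<le> t \<le> i, the path i\<rightarrow>i-1\<rightarrow>...\<rightarrow>3 and the arc 3\<rightarrow>0.  Every walk from i
to 2 runs down the whole path and then through 0 and 1, so G has diameter i.  Reversing
all arcs incident to S = {3..i} gives a digraph H in which every vertex has an arc to 0 and 0
reaches every vertex within i-2 steps, so H has diameter at most i-1.  The reversed arcs have
both ends in S \<union> {0}, so once the coordinate 0 is dropped, reversing them acts on the edge
polytope as the reflection negating the coordinates in S, which preserves Lebesgue measure.\<close>

section \<open>Distances and diameters\<close>

definition reachable_within :: "(nat \<times> nat) set \<Rightarrow> nat \<Rightarrow> nat \<Rightarrow> nat \<Rightarrow> bool" where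
  "reachable_within A n u v \<longleftrightarrow> (\<exists>k\<le>n. (u, v) \<in> A ^^ k)"

lemma reachable_within_refl: "reachable_within A n u u"
  unfolding reachable_within_def by (intro exI[of _ 0]) auto

lemma reachable_within_arc: "(u, v) \<in> A \<Longrightarrow> 1 \<le> n \<Longrightarrow> reachable_within A n u v"
  unfolding reachable_within_def by (intro exI[of _ 1]) auto

lemma reachable_within_trans:
  assumes "reachable_within A n u v" "reachable_within A m v w" "n + m \<le> p"
  shows "reachable_within A p u w"
proof -
  obtain k l where "k \<le> n" "(u, v) \<in> A ^^ k" "l \<le> m" "(v, w) \<in> A ^^ l"
    using assms(1,2) unfolding reachable_within_def by blast
  then have "(u, w) \<in> A ^^ (k + l)" "k + l \<le> p"
    using assms(3) by (auto simp: relpow_add)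
  then show ?thesis unfolding reachable_within_def by blast
qed

lemma reachable_within_two_arcs:
  "(u, v) \<in> A \<Longrightarrow> (v, w) \<in> A \<Longrightarrow> 2 \<le> n \<Longrightarrow> reachable_within A n u w"
  using reachable_within_trans[OF reachable_within_arc reachable_within_arc, of u v A 1 w 1 n] by simp

lemma reachable_within_walk:
  assumes "\<And>k. k < m \<Longrightarrow> (p k, p (Suc k)) \<in> A"
  shows "reachable_within A m (p 0) (p m)"
  using assms
proof (induction m)
  case 0 then show ?case by (simp add: reachable_within_refl)
next
  case (Suc m)
  then have "reachable_within A m (p 0) (p m)" "reachable_within A 1 (p m) (p (Suc m))"
    by (simp_all add: reachable_within_arc)
  then show ?case by (rule reachable_within_trans) simp
qed

lemma ddist_le_if_reachable_within: "reachable_within A n u v \<Longrightarrow> ddist A u v \<le> enat n"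
  unfolding reachable_within_def ddist_def
  by (auto intro: Least_le[THEN order_trans])

lemma enat_le_ddistI: "(\<And>n. (u, v) \<in> A ^^ n \<Longrightarrow> k \<le> n) \<Longrightarrow> enat k \<le> ddist A u v"
  unfolding ddist_def by (auto intro: LeastI2_ex)

lemma relpow_potential_bound:
  fixes \<phi> :: "nat \<Rightarrow> int"
  assumes "\<And>a b. (a, b) \<in> A \<Longrightarrow> \<phi> b \<le> \<phi> a + 1" "(u, v) \<in> A ^^ n"
  shows "\<phi> v \<le> \<phi> u + int n"
  using assms(2)
proof (induction n arbitrary: v)
  case 0 then show ?case by simp
next
  case (Suc n)
  then obtain w where "(u, w) \<in> A ^^ n" "(w, v) \<in> A" by auto
  with Suc.IH[of w] assms(1)[of w v] show ?case by simp
qed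

lemma ddist_le_diameter: "u \<in> V \<Longrightarrow> v \<in> V \<Longrightarrow> ddist A u v \<le> diameter V A"
  unfolding diameter_def by (meson SUP_upper2 order_refl)

lemma diameter_le_via_hub:
  assumes "\<And>u. u \<in> V \<Longrightarrow> reachable_within A p u h" "\<And>v. v \<in> V \<Longrightarrow> reachable_within A q h v"
    and "p + q \<le> n"
  shows "diameter V A \<le> enat n"
  unfolding diameter_def
proof (intro SUP_least ddist_le_if_reachable_within)
  fix u v assume "u \<in> V" "v \<in> V"
  with assms show "reachable_within A n u v" by (meson reachable_within_trans)
qed

section \<open>Reflections of product Lebesgue measure\<close>

lemma measure_image_involution:
  assumes f: "f \<in> M \<rightarrow>\<^sub>M M" "distr M M f = M" "\<And>x. x \<in> space M \<Longrightarrow> f (f x) = x"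
    and X: "X \<subseteq> space M"
  shows "measure M (f ` X) = measure M X"
proof -
  have preimage: "f -` Y \<inter> space M = f ` Y" if "Y \<subseteq> space M" for Y
    using that f(3) measurable_space[OF f(1)] by (auto, metis image_eqI)
  show ?thesis
  proof (cases "X \<in> sets M")
    case True
    then have "measure (distr M M f) X = measure M (f -` X \<inter> space M)"
      by (intro measure_distr f(1)) simp
    with f(2) preimage[OF X] show ?thesis by simp
  next
    case False
    have "f ` X \<notin> sets M"
    proof
      assume "f ` X \<in> sets M"
      then have "f -` (f ` X) \<inter> space M \<in> sets M" by (rule measurable_sets[OF f(1)])
      moreover have "f ` X \<subseteq> space M" using X measurable_space[OF f(1)] by auto
      moreover have "f ` f ` X = X"
        using X f(3) by (force simp: image_image)
      ultimately have "X \<in> sets M" using preimage by simp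
      with False show False by simp
    qed
    with False show ?thesis by (simp add: measure_notin_sets)
  qed
qed

definition reflect_coords :: "'i set \<Rightarrow> 'i set \<Rightarrow> ('i \<Rightarrow> real) \<Rightarrow> ('i \<Rightarrow> real)" where
  "reflect_coords W S x = (\<lambda>k\<in>W. if k \<in> S then - x k else x k)"

lemma reflect_coords_measurable [measurable]:
  "reflect_coords W S \<in> PiM W (\<lambda>_. lborel) \<rightarrow>\<^sub>M PiM W (\<lambda>_. lborel)"
  unfolding reflect_coords_def by measurable

lemma reflect_coords_reflect_coords:
  "x \<in> space (PiM W (\<lambda>_. lborel)) \<Longrightarrow> reflect_coords W S (reflect_coords W S x) = x"
  by (auto simp: reflect_coords_def space_PiM PiE_iff extensional_def fun_eq_iff)

lemma distr_PiM_reflect_coords: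
  assumes "finite W"
  shows "distr (PiM W (\<lambda>_. lborel)) (PiM W (\<lambda>_. lborel)) (reflect_coords W S)
    = PiM W (\<lambda>_. lborel :: real measure)"
proof -
  let ?M = "PiM W (\<lambda>_. lborel :: real measure)"
  interpret product_sigma_finite "\<lambda>_. lborel :: real measure"
    by (simp add: product_sigma_finite_def sigma_finite_lborel)
  show ?thesis
  proof (rule PiM_eqI[OF assms])
    fix A assume A: "\<And>k. k \<in> W \<Longrightarrow> A k \<in> sets (lborel :: real measure)"
    define B where "B k = (if k \<in> S then uminus -` A k else A k)" for k
    have lborel_uminus: "emeasure lborel (uminus -` Y) = emeasure lborel Y"
      if "Y \<in> sets lborel" for Y :: "real set"
      using emeasure_distr[of uminus lborel borel Y] that by (simp add: lborel_distr_uminus)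
    have B: "B k \<in> sets lborel" "emeasure lborel (B k) = emeasure lborel (A k)" if "k \<in> W" for k
      using A[OF that] measurable_sets_borel[of uminus lborel "A k"]
      by (auto simp: B_def lborel_uminus)
    have "reflect_coords W S -` Pi\<^sub>E W A \<inter> space ?M = Pi\<^sub>E W B"
      by (auto simp: reflect_coords_def B_def space_PiM PiE_iff extensional_def split: if_splits)
    then have "emeasure (distr ?M ?M (reflect_coords W S)) (Pi\<^sub>E W A) = emeasure ?M (Pi\<^sub>E W B)"
      using A assms by (subst emeasure_distr) (auto intro: sets_PiM_I_finite)
    also have "\<dots> = (\<Prod>k\<in>W. emeasure lborel (A k))"
      using B assms by (simp add: emeasure_PiM)
    finally show "emeasure (distr ?M ?M (reflect_coords W S)) (Pi\<^sub>E W A) = (\<Prod>k\<in>W. emeasure lborel (A k))" .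
  qed simp
qed

lemma measure_PiM_reflect_coords_image:
  assumes "finite W" "X \<subseteq> space (PiM W (\<lambda>_. lborel))"
  shows "measure (PiM W (\<lambda>_. lborel)) (reflect_coords W S ` X) = measure (PiM W (\<lambda>_. lborel :: real measure)) X"
  using assms
  by (intro measure_image_involution reflect_coords_measurable distr_PiM_reflect_coords
      reflect_coords_reflect_coords)

section \<open>Reversing the arcs incident to a vertex set\<close>

definition reverse_incident :: "nat set \<Rightarrow> nat \<times> nat \<Rightarrow> nat \<times> nat" where
  "reverse_incident S a = (if fst a \<in> S \<or> snd a \<in> S then (snd a, fst a) else a)"

lemma reverse_incident_reverse_incident: "reverse_incident S (reverse_incident S a) = a"
  by (cases a) (auto simp: reverse_incident_def)

lemma arc_vec_reverse_incident:
  assumes "fst a \<in> S \<or> snd a \<in> S \<Longrightarrow> fst a \<in> insert r S \<and> snd a \<in> insert r S" "u \<noteq> r"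
  shows "arc_vec (reverse_incident S a) u = (if u \<in> S then - arc_vec a u else arc_vec a u)"
  using assms by (auto simp: reverse_incident_def arc_vec_def)

lemma dir_edge_polytope_image:
  assumes "inj_on g A"
  shows "dir_edge_polytope (g ` A)
    = (\<lambda>c u. \<Sum>a\<in>A. c a * arc_vec (g a) u) ` {c. (\<forall>a\<in>A. 0 \<le> c a) \<and> sum c A = 1}"
proof -
  have reindex: "(\<Sum>b\<in>g ` A. h b) = (\<Sum>a\<in>A. h (g a))" for h :: "nat \<times> nat \<Rightarrow> real"
    using sum.reindex[OF assms] by simp
  show ?thesis
  proof (intro equalityI subsetI)
    fix x assume "x \<in> dir_edge_polytope (g ` A)"
    then obtain c where "\<forall>b\<in>g ` A. 0 \<le> c b" "(\<Sum>b\<in>g ` A. c b) = 1"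
      "x = (\<lambda>u. \<Sum>b\<in>g ` A. c b * arc_vec b u)"
      unfolding dir_edge_polytope_def by blast
    then show "x \<in> (\<lambda>c u. \<Sum>a\<in>A. c a * arc_vec (g a) u) ` {c. (\<forall>a\<in>A. 0 \<le> c a) \<and> sum c A = 1}"
      by (intro image_eqI[of _ _ "c \<circ> g"]) (auto simp: reindex)
  next
    fix x assume "x \<in> (\<lambda>c u. \<Sum>a\<in>A. c a * arc_vec (g a) u) ` {c. (\<forall>a\<in>A. 0 \<le> c a) \<and> sum c A = 1}"
    then obtain c where c: "\<forall>a\<in>A. 0 \<le> c a" "sum c A = 1" "x = (\<lambda>u. \<Sum>a\<in>A. c a * arc_vec (g a) u)"
      by blast
    define c' where "c' = c \<circ> inv_into A g"
    have "c' (g a) = c a" if "a \<in> A" for a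
      using that assms by (simp add: c'_def)
    with c show "x \<in> dir_edge_polytope (g ` A)"
      unfolding dir_edge_polytope_def by (intro CollectI exI[of _ c']) (simp add: reindex)
  qed
qed

lemma restrict_dir_edge_polytope_reverse_incident:
  assumes "\<And>a. a \<in> A \<Longrightarrow> fst a \<in> S \<or> snd a \<in> S \<Longrightarrow> fst a \<in> insert r S \<and> snd a \<in> insert r S"
    and "r \<notin> W"
  shows "(\<lambda>x. restrict x W) ` dir_edge_polytope (reverse_incident S ` A)
    = reflect_coords W S ` (\<lambda>x. restrict x W) ` dir_edge_polytope A"
proof -
  let ?C = "{c. (\<forall>a\<in>A. 0 \<le> c a) \<and> sum c A = 1}"
  have inj: "inj_on (reverse_incident S) A"
    by (metis inj_onI reverse_incident_reverse_incident)
  have arc_vec: "arc_vec (reverse_incident S a) u = (if u \<in> S then - arc_vec a u else arc_vec a u)"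
    if "a \<in> A" "u \<in> W" for a u
  proof (rule arc_vec_reverse_incident)
    show "fst a \<in> insert r S \<and> snd a \<in> insert r S" if "fst a \<in> S \<or> snd a \<in> S"
      using assms(1) \<open>a \<in> A\<close> that by blast
    show "u \<noteq> r" using assms(2) \<open>u \<in> W\<close> by blast
  qed
  have reflect: "restrict (\<lambda>u. \<Sum>a\<in>A. c a * arc_vec (reverse_incident S a) u) W
    = reflect_coords W S (restrict (\<lambda>u. \<Sum>a\<in>A. c a * arc_vec a u) W)" for c
    unfolding reflect_coords_def
    by (rule ext) (simp add: arc_vec sum_negf[symmetric] cong: sum.cong)
  have "(\<lambda>x. restrict x W) ` dir_edge_polytope (reverse_incident S ` A)
    = (\<lambda>c. restrict (\<lambda>u. \<Sum>a\<in>A. c a * arc_vec (reverse_incident S a) u) W) ` ?C"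
    by (simp add: dir_edge_polytope_image[OF inj] image_image)
  also have "\<dots> = (\<lambda>c. reflect_coords W S (restrict (\<lambda>u. \<Sum>a\<in>A. c a * arc_vec a u) W)) ` ?C"
    by (simp only: reflect)
  also have "\<dots> = reflect_coords W S ` (\<lambda>x. restrict x W) ` dir_edge_polytope A"
    using dir_edge_polytope_image[of id A] by (simp add: image_image)
  finally show ?thesis .
qed

lemma norm_volume_reverse_incident:
  assumes "finite V"
    and "\<And>a. a \<in> A \<Longrightarrow> fst a \<in> S \<or> snd a \<in> S \<Longrightarrow> fst a \<in> insert (Min V) S \<and> snd a \<in> insert (Min V) S"
  shows "norm_volume V (reverse_incident S ` A) = norm_volume V A"
proof -
  let ?W = "V - {Min V}"
  have "(\<lambda>x. restrict x ?W) ` dir_edge_polytope A \<subseteq> space (PiM ?W (\<lambda>_. lborel))"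
    by (auto simp: space_PiM PiE_def)
  moreover have "(\<lambda>x. restrict x ?W) ` dir_edge_polytope (reverse_incident S ` A)
    = reflect_coords ?W S ` (\<lambda>x. restrict x ?W) ` dir_edge_polytope A"
    using restrict_dir_edge_polytope_reverse_incident[OF assms(2), where W = ?W] by simp
  ultimately show ?thesis
    using assms(1) by (simp add: norm_volume_def Let_def measure_PiM_reflect_coords_image)
qed

section \<open>The two digraphs\<close>

definition arcs_G :: "nat \<Rightarrow> (nat \<times> nat) set" where
  "arcs_G i = {(0,1), (1,2), (2,0), (1,0), (3,0)} \<union> {(t + 1, t) | t. 3 \<le> t \<and> t < i}
     \<union> {(0, t) | t. 3 \<le> t \<and> t \<le> i}"

definition arcs_H :: "nat \<Rightarrow> (nat \<times> nat) set" where
  "arcs_H i = {(0,1), (1,2), (2,0), (1,0), (0,3)} \<union> {(t, t + 1) | t. 3 \<le> t \<and> t < i}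
     \<union> {(t, 0) | t. 3 \<le> t \<and> t \<le> i}"

lemma digraph_arcs_G: "i \<ge> 3 \<Longrightarrow> digraph {0..i} (arcs_G i)"
  unfolding digraph_def arcs_G_def by auto

lemma digraph_arcs_H: "i \<ge> 3 \<Longrightarrow> digraph {0..i} (arcs_H i)"
  unfolding digraph_def arcs_H_def by auto

lemma diameter_arcs_G_le:
  assumes "i \<ge> 4"
  shows "diameter {0..i} (arcs_G i) \<le> enat i"
proof -
  have to_hub: "reachable_within (arcs_G i) (i - 2) u 0" if "u \<in> {0..i}" for u
  proof -
    consider "u = 0" | "u = 1 \<or> u = 2" | "3 \<le> u" using that by fastforce
    then show ?thesis
    proof cases
      case 3
      have down: "(Suc t, t) \<in> arcs_G i" if "3 \<le> t" "t < i" for t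
        using that by (auto simp: arcs_G_def)
      have "(u - k, u - Suc k) \<in> arcs_G i" if "k < u - 3" for k
        using down[of "u - Suc k"] that \<open>u \<in> {0..i}\<close> by (simp add: Suc_diff_Suc)
      then have path: "reachable_within (arcs_G i) (u - 3) u 3"
        using reachable_within_walk[of "u - 3" "\<lambda>k. u - k"] 3 by simp
      have "(3, 0) \<in> arcs_G i" by (simp add: arcs_G_def)
      then have "reachable_within (arcs_G i) 1 3 0" by (simp add: reachable_within_arc)
      with path 3 that assms show ?thesis by (simp add: reachable_within_trans)
    qed (use assms in \<open>auto simp: arcs_G_def intro: reachable_within_refl reachable_within_arc\<close>)
  qed
  have from_hub: "reachable_within (arcs_G i) 2 0 v" if "v \<in> {0..i}" for v
  proof -
    have arcs: "(0, 1) \<in> arcs_G i" "(1, 2) \<in> arcs_G i" by (simp_all add: arcs_G_def)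
    consider "v = 0" | "v = 1" | "v = 2" | "3 \<le> v" using that by fastforce
    then show ?thesis
    proof cases
      case 3
      with arcs show ?thesis by (simp add: reachable_within_two_arcs)
    next
      case 4
      with that show ?thesis by (intro reachable_within_arc) (auto simp: arcs_G_def)
    qed (use arcs in \<open>auto intro: reachable_within_refl reachable_within_arc\<close>)
  qed
  show ?thesis
    using assms by (intro diameter_le_via_hub[OF to_hub from_hub]) auto
qed

lemma ddist_arcs_G_ge:
  assumes "i \<ge> 4"
  shows "enat i \<le> ddist (arcs_G i) i 2"
proof (rule enat_le_ddistI)
  \<comment> \<open>\<phi> v = i - (distance from v to 2)\<close>
  define \<phi> where "\<phi> t = (if t = 0 then int i - 2 else if t = 1 then int i - 1
     else if t = 2 then int i else int i - int t)" for t
  have arcs: "\<phi> b \<le> \<phi> a + 1" if "(a, b) \<in> arcs_G i" for a b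
    using that assms by (auto simp: arcs_G_def \<phi>_def)
  fix n assume "(i, 2) \<in> arcs_G i ^^ n"
  from relpow_potential_bound[where \<phi> = \<phi>, OF arcs this] assms show "i \<le> n"
    by (simp add: \<phi>_def)
qed

lemma diameter_arcs_G:
  assumes "i \<ge> 4"
  shows "diameter {0..i} (arcs_G i) = enat i"
proof (rule antisym)
  show "diameter {0..i} (arcs_G i) \<le> enat i"
    using assms by (rule diameter_arcs_G_le)
  have "ddist (arcs_G i) i 2 \<le> diameter {0..i} (arcs_G i)"
    using assms by (intro ddist_le_diameter) auto
  with ddist_arcs_G_ge[OF assms] show "enat i \<le> diameter {0..i} (arcs_G i)"
    by (rule order_trans)
qed

lemma diameter_arcs_H_le:
  assumes "i \<ge> 4"
  shows "diameter {0..i} (arcs_H i) \<le> enat (i - 1)"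
proof -
  have to_hub: "reachable_within (arcs_H i) 1 u 0" if "u \<in> {0..i}" for u
    using that by (cases "u = 0")
      (auto simp: arcs_H_def intro: reachable_within_refl reachable_within_arc)
  have from_hub: "reachable_within (arcs_H i) (i - 2) 0 v" if "v \<in> {0..i}" for v
  proof -
    have arcs: "(0, 1) \<in> arcs_H i" "(1, 2) \<in> arcs_H i" "(0, 3) \<in> arcs_H i"
      by (simp_all add: arcs_H_def)
    consider "v = 0" | "v = 1" | "v = 2" | "3 \<le> v" using that by fastforce
    then show ?thesis
    proof cases
      case 3
      with arcs(1,2) assms show ?thesis by (simp add: reachable_within_two_arcs)
    next
      case 4
      have "(3 + k, 3 + Suc k) \<in> arcs_H i" if "k < v - 3" for k
        using that \<open>v \<in> {0..i}\<close> by (auto simp: arcs_H_def)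
      then have "reachable_within (arcs_H i) (v - 3) 3 v"
        using reachable_within_walk[of "v - 3" "\<lambda>k. 3 + k"] 4 by simp
      with arcs(3) 4 that show ?thesis
        by (auto intro: reachable_within_trans reachable_within_arc)
    qed (use arcs assms in \<open>auto intro: reachable_within_refl reachable_within_arc\<close>)
  qed
  show ?thesis
    using assms by (intro diameter_le_via_hub[OF to_hub from_hub]) auto
qed

lemma arcs_G_eq_reverse_incident:
  assumes "i \<ge> 3"
  shows "arcs_G i = reverse_incident {3..i} ` arcs_H i"
proof -
  have "reverse_incident {3..i} ` {(0,1), (1,2), (2,0), (1,0), (0,3)} = {(0,1), (1,2), (2,0), (1,0), (3,0)}"
    using assms by (simp add: reverse_incident_def)
  moreover have "reverse_incident {3..i} ` {(t, t + 1) | t. 3 \<le> t \<and> t < i} = {(t + 1, t) | t. 3 \<le> t \<and> t < i}"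
    by (force simp: reverse_incident_def)
  moreover have "reverse_incident {3..i} ` {(t, 0) | t. 3 \<le> t \<and> t \<le> i} = {(0, t) | t. 3 \<le> t \<and> t \<le> i}"
    by (force simp: reverse_incident_def)
  ultimately show ?thesis
    unfolding arcs_G_def arcs_H_def image_Un by simp
qed

lemma norm_volume_arcs_G_eq_arcs_H:
  assumes "i \<ge> 3"
  shows "norm_volume {0..i} (arcs_G i) = norm_volume {0..i} (arcs_H i)"
proof -
  have "Min {0..i} = (0::nat)" by (rule Min_eqI) auto
  then show ?thesis
    unfolding arcs_G_eq_reverse_incident[OF assms]
    by (intro norm_volume_reverse_incident) (auto simp: arcs_H_def)
qed

theorem theorem9:
  fixes i :: nat
  assumes "i \<ge> 8"
  shows "\<exists>j::nat. j < i \<and>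
           (\<exists>VG AG VH AH.
              digraph VG AG \<and> digraph VH AH \<and>
              diameter VG AG = enat i \<and> diameter VH AH = enat j \<and>
              norm_volume VG AG = norm_volume VH AH)"
proof -
  obtain j where j: "diameter {0..i} (arcs_H i) = enat j" "j \<le> i - 1"
    using diameter_arcs_H_le[of i] assms by (cases "diameter {0..i} (arcs_H i)") auto
  show ?thesis
    using j assms digraph_arcs_G[of i] digraph_arcs_H[of i] diameter_arcs_G[of i]
      norm_volume_arcs_G_eq_arcs_H[of i]
    by (intro exI[of _ j] conjI exI[of _ "{0..i}"] exI[of _ "arcs_G i"] exI[of _ "arcs_H i"]) auto
qed

end
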